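(* Let $p\in(1,\infty)$, $X\in\mathfrak A_p$, and $q\in(1,p)$ with $X\in\mathfrak A_q$. Let $\theta\in[0,q)$, $S\in\mathcal{LCR}_\theta(X)$ closed, and $\{\mathfrak m_k\}\in\mathfrak M_\theta(S)$ with parameter $\epsilon\in(0,\frac1{10}]$. Let $\alpha>\theta/p$. Then for each $R>0$ there is $C>0$ such that $$\|M^R_{q,\alpha}(g)\|_{L^p(\mathfrak m_0)}\le C\|g\|_{L^p(\mu)}\quad\text{for all }g\in L^p(\mu),$$ where $M^R_{q,\alpha}(g)(x)=\sup_{r\in(0,R]}r^\alpha\big(\frac1{\mu(B_r(x))}\int_{B_r(x)}|g|^q\,d\mu\big)^{1/q}$.
   Context: A metric measure space is a triple $X=(X,d,\mu)$ with $(X,d)$ a complete separable metric space and $\mu$ a Borel regular measure with $0<\mu(B)<\infty$ for every ball $B$ and $\operatorname{supp}\mu=X$. All balls are closed: $B_r(x)=\{y:d(x,y)\le r\}$. A measure on $X$ means a nonzero Borel regular locally finite (outer) measure. $\mu$ is uniformly locally doubling if for every $R>0$, $\sup_{r\in(0,R]}\sup_x\mu(B_{2r}(x))/\mu(B_r(x))<\infty$. $\operatorname{lip}f(x)=\limsup_{y\to x}|f(y)-f(x)|/d(x,y)$ at accumulation points and $0$ otherwise; for a measure $\mathfrak m$, $\mathcal E_{\mathfrak m}(f,G)=\inf_c\frac1{\mathfrak m(G)}\int_G|f-c|d\mathfrak m$. $X\in\mathfrak A_q$ if $\mu$ is uniformly locally doubling and for every $R>0$ there are $C>0,\lambda\ge1$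 with $\mathcal E_\mu(f,B_r(x))\le Cr(\frac1{\mu(B_{\lambda r}(x))}\int_{B_{\lambda r}(x)}(\operatorname{lip}f)^qd\mu)^{1/q}$ for all Lipschitz $f$, $x$, $r\in(0,R]$. For $\theta\ge0$: $\mathcal H_{\theta,\delta}(E)=\inf\{\sum_i\mu(B_{r_i}(x_i))/r_i^\theta:E\subset\bigcup_iB_{r_i}(x_i),\ r_i<\delta\}$. $S\in\mathcal{LCR}_\theta(X)$ if there is $\lambda>0$ with $\mathcal H_{\theta,r}(B_r(x)\cap S)\ge\lambda\mu(B_r(x))/r^\theta$ for all $x\in S$, $r\in(0,1]$. $\{\mathfrak m_k\}_{k=0}^\infty\in\mathfrak M_\theta(S)$ (parameter $\epsilon$) means: (M1) $\operatorname{supp}\mathfrak m_k=S$; (M2) $\exists C_1$: $\mathfrak m_k(B_r(x))\le C_1\mu(B_r(x))/r^\theta$ for all $k$, $x\in X$, $r\in(0,\epsilon^k]$; (M3) $\exists C_2$: $\mathfrak m_k(B_r(x))\ge C_2\mu(B_r(x))/r^\theta$ for all $k$, $x\in S$, $r\in[\epsilon^k,1]$; (M4) $\mathfrak m_k=w_k\mathfrak m_0$, $w_k\in L^\infty(\mathfrak m_0)$, $\exists C_3$: $\epsilon^{\theta j}/C_3\le w_k/w_{k+j}\le C_3$ $\mathfrak m_0$-a.e. on $S$ for all $k,j$. *)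

theory Defs
  imports "HOL-Analysis.Analysis"
begin

definition epowr :: "ennreal \<Rightarrow> real \<Rightarrow> ennreal" where
  "epowr a s = (if a = \<infinity> then \<infinity> else ennreal (enn2real a powr s))"

definition avg :: "'a measure \<Rightarrow> 'a set \<Rightarrow> ('a \<Rightarrow> ennreal) \<Rightarrow> ennreal" where
  "avg M B f = (\<integral>\<^sup>+ y\<in>B. f y \<partial>M) / emeasure M B"

definition lp_norm :: "'a measure \<Rightarrow> ('a \<Rightarrow> ennreal) \<Rightarrow> real \<Rightarrow> ennreal" where
  "lp_norm M F p = epowr (\<integral>\<^sup>+ x. epowr (F x) p \<partial>M) (1 / p)"

(* metric measure space (closed balls cball); complete separable via polish_space *)
definition mms :: "('a::polish_space) measure \<Rightarrow> bool" where
  "mms \<mu> \<longleftrightarrow> sets \<mu> = sets borel \<and>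
     (\<forall>x r. r > 0 \<longrightarrow> 0 < emeasure \<mu> (cball x r) \<and> emeasure \<mu> (cball x r) < \<infinity>)"

definition unif_loc_doubling :: "('a::metric_space) measure \<Rightarrow> bool" where
  "unif_loc_doubling \<mu> \<longleftrightarrow> (\<forall>R>0. \<exists>D. \<forall>r\<in>{0<..R}. \<forall>x.
      emeasure \<mu> (cball x (2*r)) \<le> ennreal D * emeasure \<mu> (cball x r))"

definition lipc :: "('a::metric_space \<Rightarrow> real) \<Rightarrow> 'a \<Rightarrow> ennreal" where
  "lipc f x = (if x islimpt UNIV
      then Limsup (at x) (\<lambda>y. ennreal (\<bar>f y - f x\<bar> / dist x y)) else 0)"

definition osc :: "'a measure \<Rightarrow> ('a \<Rightarrow> real) \<Rightarrow> 'a set \<Rightarrow> ennreal" where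
  "osc M f G = (INF c::real. avg M G (\<lambda>y. ennreal \<bar>f y - c\<bar>))"

definition class_A :: "('a::polish_space) measure \<Rightarrow> real \<Rightarrow> bool" where
  "class_A \<mu> q \<longleftrightarrow> unif_loc_doubling \<mu> \<and>
     (\<forall>R>0. \<exists>C>0. \<exists>lam\<ge>1. \<forall>f x r. (\<exists>L. L-lipschitz_on UNIV f) \<longrightarrow> r \<in> {0<..R} \<longrightarrow>
        osc \<mu> f (cball x r) \<le>
          ennreal (C * r) * epowr (avg \<mu> (cball x (lam*r)) (\<lambda>y. epowr (lipc f y) q)) (1/q))"

definition H_content :: "'a::metric_space measure \<Rightarrow> real \<Rightarrow> real \<Rightarrow> 'a set \<Rightarrow> ennreal" where
  "H_content \<mu> \<theta> \<delta> E = (INF (c, s) \<in> {(c::nat \<Rightarrow> 'a, s::nat \<Rightarrow> real).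
       (\<forall>i. 0 < s i \<and> s i < \<delta>) \<and> E \<subseteq> (\<Union>i. cball (c i) (s i))}.
     (\<Sum>i. emeasure \<mu> (cball (c i) (s i)) / ennreal (s i powr \<theta>)))"

definition LCR :: "'a::metric_space measure \<Rightarrow> real \<Rightarrow> 'a set \<Rightarrow> bool" where
  "LCR \<mu> \<theta> S \<longleftrightarrow> (\<exists>lam>0. \<forall>x\<in>S. \<forall>r\<in>{0<..1}.
      H_content \<mu> \<theta> r (cball x r \<inter> S) \<ge> ennreal lam * emeasure \<mu> (cball x r) / ennreal (r powr \<theta>))"

definition msupp :: "'a::metric_space measure \<Rightarrow> 'a set" where
  "msupp M = {x. \<forall>r>0. emeasure M (ball x r) > 0}"

(* "a measure on X": nonzero, Borel, locally finite *)
definition loc_finite_borel :: "'a::metric_space measure \<Rightarrow> bool" where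
  "loc_finite_borel M \<longleftrightarrow> sets M = sets borel \<and> emeasure M UNIV \<noteq> 0 \<and>
     (\<forall>x. \<exists>r>0. emeasure M (ball x r) < \<infinity>)"

definition frakM :: "'a::metric_space measure \<Rightarrow> real \<Rightarrow> 'a set \<Rightarrow> real \<Rightarrow> (nat \<Rightarrow> 'a measure) \<Rightarrow> bool" where
  "frakM \<mu> \<theta> S \<epsilon> m \<longleftrightarrow>
     (\<forall>k. loc_finite_borel (m k)) \<and>
     (\<forall>k. msupp (m k) = S) \<and>
     (\<exists>C1>0. \<forall>k x r. 0 < r \<and> r \<le> \<epsilon> ^ k \<longrightarrow>
        emeasure (m k) (cball x r) \<le> ennreal C1 * emeasure \<mu> (cball x r) / ennreal (r powr \<theta>)) \<and>
     (\<exists>C2>0. \<forall>k. \<forall>x\<in>S. \<forall>r. \<epsilon> ^ k \<le> r \<and> r \<le> 1 \<longrightarrow>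
        emeasure (m k) (cball x r) \<ge> ennreal C2 * emeasure \<mu> (cball x r) / ennreal (r powr \<theta>)) \<and>
     (\<exists>w :: nat \<Rightarrow> 'a \<Rightarrow> real.
        (\<forall>k. w k \<in> borel_measurable (m 0) \<and> (\<forall>x. w k x \<ge> 0) \<and>
             (\<exists>K. AE x in m 0. w k x \<le> K) \<and>
             m k = density (m 0) (\<lambda>x. ennreal (w k x))) \<and>
        (\<exists>C3>0. \<forall>k j. AE x in m 0. x \<in> S \<longrightarrow>
             (\<epsilon> ^ j) powr \<theta> / C3 \<le> w k x / w (k + j) x \<and> w k x / w (k + j) x \<le> C3))"

definition maxfun :: "'a::metric_space measure \<Rightarrow> real \<Rightarrow> real \<Rightarrow> real \<Rightarrow> ('a \<Rightarrow> real) \<Rightarrow> 'a \<Rightarrow> ennreal" where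
  "maxfun \<mu> q \<alpha> R g x = (SUP r\<in>{0<..R}. ennreal (r powr \<alpha>) *
      epowr (avg \<mu> (cball x r) (\<lambda>y. ennreal (\<bar>g y\<bar> powr q))) (1/q))"

end

theory Submission
  imports Defs
begin

text \<open>
  Every radius \<open>r \<le> R\<close> is comparable to a dyadic radius \<open>\<rho>\<^sub>j = R/2^j\<close>, so by doubling and
  Jensen's inequality the \<open>p\<close>-th power of the maximal function at \<open>x\<close> is dominated by
  \<open>\<Sum>\<^sub>j \<rho>\<^sub>j^(\<alpha>p)\<close> times the \<open>\<mu>\<close>-average of \<open>|g|^p\<close> over \<open>B(x,\<rho>\<^sub>j)\<close>. By Tonelli, integrating
  such an average against \<open>\<frak>m\<^sub>0\<close> costs the factor
  \<open>sup\<^sub>y \<integral>\<^bsub>B(y,\<rho>)\<^esub> 1/\<mu>(B(x,\<rho>)) d\<frak>m\<^sub>0(x)\<close>, which the doubling property and the upper bound (M2)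
  make \<open>O(\<rho>^-\<theta>)\<close>. Since \<open>\<alpha>p > \<theta>\<close> the resulting series in \<open>j\<close> is geometric.
\<close>

lemma sigma_finite_measure_finite_unit_cballs:
  fixes M :: "'a::{metric_space, second_countable_topology} measure"
  assumes sets: "sets M = sets borel" and fin: "\<And>x. emeasure M (cball x 1) < \<infinity>"
  shows "sigma_finite_measure M"
proof
  obtain D :: "'a set" where D: "countable D" "\<And>X. open X \<Longrightarrow> X \<noteq> {} \<Longrightarrow> \<exists>d\<in>D. d \<in> X"
    using countable_dense_exists by blast
  have "\<Union> ((\<lambda>d. cball d 1) ` D) = UNIV"
  proof safe
    fix x :: 'a
    obtain d where "d \<in> D" "d \<in> ball x 1" using D(2)[of "ball x 1"] by auto
    then show "x \<in> \<Union> ((\<lambda>d. cball d 1) ` D)" by (auto simp: dist_commute intro!: bexI[of _ d])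
  qed auto
  then show "\<exists>A. countable A \<and> A \<subseteq> sets M \<and> \<Union> A = space M \<and> (\<forall>a\<in>A. emeasure M a \<noteq> \<infinity>)"
    using D(1) fin sets_eq_imp_space_eq[OF sets]
    by (intro exI[of _ "(\<lambda>d. cball d 1) ` D"]) (auto simp: sets less_top[symmetric])
qed

lemma borel_measurable_indicator_cball_pair:
  fixes M N :: "'a::{metric_space, second_countable_topology} measure"
  assumes "sets M = sets borel" "sets N = sets borel"
  shows "(\<lambda>(x, y). indicator (cball x r) y :: ennreal) \<in> borel_measurable (M \<Otimes>\<^sub>M N)"
proof -
  have "{z::'a \<times> 'a. dist (fst z) (snd z) \<le> r} \<in> sets borel"
    by (intro borel_closed closed_Collect_le continuous_intros)
  then have "{z::'a \<times> 'a. dist (fst z) (snd z) \<le> r} \<in> sets (M \<Otimes>\<^sub>M N)"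
    using sets_pair_measure_cong[OF assms] borel_prod by metis
  then have "(indicator {z::'a \<times> 'a. dist (fst z) (snd z) \<le> r} :: _ \<Rightarrow> ennreal) \<in> borel_measurable (M \<Otimes>\<^sub>M N)"
    by simp
  moreover have "(\<lambda>(x, y). indicator (cball x r) y :: ennreal) = indicator {z::'a \<times> 'a. dist (fst z) (snd z) \<le> r}"
    by (auto simp: indicator_def fun_eq_iff)
  ultimately show ?thesis by simp
qed

lemma nn_integral_cball_kernel_swap:
  fixes \<mu> \<nu> :: "'a::{metric_space, second_countable_topology} measure"
  assumes sets: "sets \<mu> = sets borel" "sets \<nu> = sets borel"
    and sf: "sigma_finite_measure \<mu>" "sigma_finite_measure \<nu>"
    and f: "f \<in> borel_measurable borel" and \<phi>: "\<phi> \<in> borel_measurable borel"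
  shows "(\<integral>\<^sup>+x. \<phi> x * (\<integral>\<^sup>+y. indicator (cball x r) y * f y \<partial>\<mu>) \<partial>\<nu>)
       = (\<integral>\<^sup>+y. f y * (\<integral>\<^sup>+x. indicator (cball y r) x * \<phi> x \<partial>\<nu>) \<partial>\<mu>)"
proof -
  interpret pair_sigma_finite \<nu> \<mu> using sf by (simp add: pair_sigma_finite_def)
  have fm: "f \<in> borel_measurable \<mu>" and \<phi>m: "\<phi> \<in> borel_measurable \<nu>"
    using f \<phi> measurable_cong_sets[OF sets(1) refl] measurable_cong_sets[OF sets(2) refl] by blast+
  have "(\<lambda>z. \<phi> (fst z) * indicator (cball (fst z) r) (snd z) * f (snd z)) \<in> borel_measurable (\<nu> \<Otimes>\<^sub>M \<mu>)"
    using borel_measurable_indicator_cball_pair[OF sets(2,1), of r] fm \<phi>m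
    by (intro borel_measurable_times_ennreal) (auto simp: case_prod_beta')
  then have F: "(\<lambda>(x, y). \<phi> x * indicator (cball x r) y * f y) \<in> borel_measurable (\<nu> \<Otimes>\<^sub>M \<mu>)"
    by (simp add: case_prod_beta')
  have "(\<integral>\<^sup>+x. \<phi> x * (\<integral>\<^sup>+y. indicator (cball x r) y * f y \<partial>\<mu>) \<partial>\<nu>)
      = (\<integral>\<^sup>+x. (\<integral>\<^sup>+y. \<phi> x * indicator (cball x r) y * f y \<partial>\<mu>) \<partial>\<nu>)"
  proof (rule nn_integral_cong)
    fix x
    have "(\<lambda>y. indicator (cball x r) y * f y) \<in> borel_measurable \<mu>"
      using fm sets(1) by (intro borel_measurable_times_ennreal borel_measurable_indicator) auto
    then show "\<phi> x * (\<integral>\<^sup>+y. indicator (cball x r) y * f y \<partial>\<mu>) = (\<integral>\<^sup>+y. \<phi> x * indicator (cball x r) y * f y \<partial>\<mu>)"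
      by (subst nn_integral_cmult[symmetric]) (auto simp: mult.assoc)
  qed
  also have "\<dots> = (\<integral>\<^sup>+y. (\<integral>\<^sup>+x. \<phi> x * indicator (cball x r) y * f y \<partial>\<nu>) \<partial>\<mu>)"
    using Fubini'[OF F] by simp
  also have "\<dots> = (\<integral>\<^sup>+y. f y * (\<integral>\<^sup>+x. indicator (cball y r) x * \<phi> x \<partial>\<nu>) \<partial>\<mu>)"
  proof (rule nn_integral_cong)
    fix y :: 'a
    have "indicator (cball x r) y = (indicator (cball y r) x :: ennreal)" for x
      by (simp add: indicator_def dist_commute)
    then show "(\<integral>\<^sup>+x. \<phi> x * indicator (cball x r) y * f y \<partial>\<nu>) = f y * (\<integral>\<^sup>+x. indicator (cball y r) x * \<phi> x \<partial>\<nu>)"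
      using \<phi>m sets(2)
      by (subst nn_integral_cmult[symmetric])
        (auto simp: mult_ac intro!: nn_integral_cong borel_measurable_times_ennreal borel_measurable_indicator)
  qed
  finally show ?thesis .
qed

lemma borel_measurable_emeasure_cball:
  fixes \<mu> :: "'a::{metric_space, second_countable_topology} measure"
  assumes "sets \<mu> = sets borel" "sigma_finite_measure \<mu>"
  shows "(\<lambda>x. emeasure \<mu> (cball x r)) \<in> borel_measurable borel"
proof -
  interpret sigma_finite_measure \<mu> by fact
  have "(\<lambda>x. \<integral>\<^sup>+y. indicator (cball x r) y \<partial>\<mu>) \<in> borel_measurable borel"
    using borel_measurable_indicator_cball_pair[OF refl assms(1)]
    by (intro borel_measurable_nn_integral) simp
  then show ?thesis using assms(1) by simp
qed

lemma borel_measurable_avg_cball: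
  fixes \<mu> :: "'a::{metric_space, second_countable_topology} measure"
  assumes sets: "sets \<mu> = sets borel" and "sigma_finite_measure \<mu>" and f: "f \<in> borel_measurable borel"
  shows "(\<lambda>x. avg \<mu> (cball x r) f) \<in> borel_measurable borel"
proof -
  interpret sigma_finite_measure \<mu> by fact
  have "f \<in> borel_measurable \<mu>" using f measurable_cong_sets[OF sets refl] by blast
  then have "(\<lambda>x. \<integral>\<^sup>+y. indicator (cball x r) y * f y \<partial>\<mu>) \<in> borel_measurable borel"
    using borel_measurable_indicator_cball_pair[OF refl sets, of r]
    by (intro borel_measurable_nn_integral borel_measurable_times_ennreal) (auto simp: case_prod_beta')
  moreover have "avg \<mu> (cball x r) f = (\<integral>\<^sup>+y. indicator (cball x r) y * f y \<partial>\<mu>) * inverse (emeasure \<mu> (cball x r))" for x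
    unfolding avg_def divide_ennreal_def by (simp add: nn_integral_set_ennreal mult.commute)
  ultimately show ?thesis
    using borel_measurable_emeasure_cball[OF assms(1,2)] by simp
qed

lemma epowr_ennreal: "0 \<le> x \<Longrightarrow> epowr (ennreal x) s = ennreal (x powr s)"
  by (simp add: epowr_def)

lemma epowr_mono:
  assumes "a \<le> b" "0 < s"
  shows "epowr a s \<le> epowr b s"
  using assms
  by (cases "b = \<infinity>") (auto simp: epowr_def top_unique less_top intro!: ennreal_leI powr_mono2 enn2real_mono)

lemma epowr_epowr: "epowr (epowr a s) t = epowr a (s * t)"
  by (simp add: epowr_def powr_powr)

lemma epowr_ennreal_mult:
  assumes "0 \<le> c" "0 < s"
  shows "epowr (ennreal c * a) s = ennreal (c powr s) * epowr a s"
proof (cases a rule: ennreal_cases)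
  case (real a')
  then show ?thesis
    using assms by (simp add: epowr_def ennreal_mult'[symmetric] powr_mult)
next
  case top
  then show ?thesis
    using assms by (cases "c = 0") (auto simp: epowr_def ennreal_mult_top)
qed

lemma Young_powr_split:
  fixes t l p q :: real
  assumes "0 \<le> t" "0 < l" "0 < q" "q < p"
  shows "t powr q \<le> (1 - q/p) * l powr q + (q/p) * l powr (q - p) * t powr p"
proof (cases "t = 0")
  case True
  then show ?thesis using assms by auto
next
  case False
  then have t: "t > 0" using assms by auto
  have p: "p > 0" using assms by auto
  have "((t/l) powr p) powr (q/p) * 1 powr (1 - q/p) \<le> (q/p) * (t/l) powr p + (1 - q/p) * 1"
    using assms t p by (intro Youngs_inequality_0) (auto simp: field_simps)
  then have "(t/l) powr q \<le> (q/p) * (t/l) powr p + (1 - q/p)"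
    using p by (simp add: powr_powr)
  then have "l powr q * (t/l) powr q \<le> l powr q * ((q/p) * (t/l) powr p + (1 - q/p))"
    by (intro mult_left_mono) auto
  moreover have "l powr q * (t/l) powr q = t powr q"
    using t assms by (simp add: powr_divide)
  moreover have "l powr q * (t/l) powr p = l powr (q - p) * t powr p"
    using t assms by (simp add: powr_divide powr_diff field_simps)
  ultimately show ?thesis by (simp add: algebra_simps)
qed

lemma set_nn_integral_powr_le_Young:
  fixes h :: "'a \<Rightarrow> real"
  assumes B: "B \<in> sets M" and h: "h \<in> borel_measurable M" "\<And>y. 0 \<le> h y"
    and "0 < l" "0 < q" "q < p"
  shows "(\<integral>\<^sup>+y\<in>B. ennreal (h y powr q) \<partial>M)
    \<le> ennreal ((1 - q/p) * l powr q) * emeasure M B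
      + ennreal ((q/p) * l powr (q - p)) * (\<integral>\<^sup>+y\<in>B. ennreal (h y powr p) \<partial>M)"
proof -
  have "(\<integral>\<^sup>+y\<in>B. ennreal (h y powr q) \<partial>M)
      \<le> (\<integral>\<^sup>+y. ennreal ((1 - q/p) * l powr q) * indicator B y
             + ennreal ((q/p) * l powr (q - p)) * (ennreal (h y powr p) * indicator B y) \<partial>M)"
  proof (rule nn_integral_mono)
    fix y
    have "ennreal (h y powr q)
        \<le> ennreal ((1 - q/p) * l powr q) + ennreal ((q/p) * l powr (q - p)) * ennreal (h y powr p)"
      using Young_powr_split[OF h(2) assms(4-6)] assms(4-6)
      by (simp add: ennreal_plus[symmetric] ennreal_mult[symmetric] del: ennreal_plus)
    then show "ennreal (h y powr q) * indicator B y
        \<le> ennreal ((1 - q/p) * l powr q) * indicator B y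
          + ennreal ((q/p) * l powr (q - p)) * (ennreal (h y powr p) * indicator B y)"
      by (auto simp: indicator_def)
  qed
  also have "\<dots> = ennreal ((1 - q/p) * l powr q) * emeasure M B
      + ennreal ((q/p) * l powr (q - p)) * (\<integral>\<^sup>+y\<in>B. ennreal (h y powr p) \<partial>M)"
    using h B by (subst nn_integral_add) (auto simp: nn_integral_cmult)
  finally show ?thesis .
qed

lemma avg_powr_le_epowr_avg:
  fixes h :: "'a \<Rightarrow> real"
  assumes B: "B \<in> sets M" "0 < emeasure M B" "emeasure M B < \<infinity>"
    and h: "h \<in> borel_measurable M" "\<And>y. 0 \<le> h y" and pq: "0 < q" "q < p"
  shows "avg M B (\<lambda>y. ennreal (h y powr q)) \<le> epowr (avg M B (\<lambda>y. ennreal (h y powr p))) (q/p)"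
proof -
  obtain m where m: "emeasure M B = ennreal m" "0 < m"
    using B(2,3) by (cases "emeasure M B" rule: ennreal_cases) auto
  have p: "p > 0" using pq by auto
  show ?thesis
  proof (cases "(\<integral>\<^sup>+y\<in>B. ennreal (h y powr p) \<partial>M) = \<infinity>")
    case True
    then show ?thesis using m by (simp add: avg_def epowr_def ennreal_top_divide)
  next
    case False
    then obtain I where I: "(\<integral>\<^sup>+y\<in>B. ennreal (h y powr p) \<partial>M) = ennreal I" "0 \<le> I"
      by (cases "\<integral>\<^sup>+y\<in>B. ennreal (h y powr p) \<partial>M" rule: ennreal_cases) auto
    define A where "A = I / m"
    have avg_p: "avg M B (\<lambda>y. ennreal (h y powr p)) = ennreal A"
      unfolding avg_def A_def using m I by (simp add: divide_ennreal)
    show ?thesis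
    proof (cases "I = 0")
      case True
      then have "AE y in M. ennreal (h y powr p) * indicator B y = 0"
        using I h B by (subst nn_integral_0_iff_AE[symmetric]) auto
      then have "AE y in M. ennreal (h y powr q) * indicator B y = 0"
        by eventually_elim (use h(2) in \<open>auto simp: indicator_def\<close>)
      then have "(\<integral>\<^sup>+y\<in>B. ennreal (h y powr q) \<partial>M) = 0"
        using h B by (subst nn_integral_0_iff_AE) auto
      then show ?thesis unfolding avg_def by simp
    next
      case False
      then have A: "A > 0" using I m by (simp add: A_def)
      define l where "l = A powr (1/p)"
      have l: "l > 0" using A by (simp add: l_def)
      have "l powr q = A powr (q/p)" "l powr (q - p) * I = A powr (q/p) * m"
        using A p m by (simp_all add: l_def A_def powr_powr diff_divide_distrib powr_diff field_simps)
      then have "(1 - q/p) * l powr q * m + (q/p) * l powr (q - p) * I = A powr (q/p) * m"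
        by (simp add: field_simps)
      then have "(\<integral>\<^sup>+y\<in>B. ennreal (h y powr q) \<partial>M) \<le> ennreal (A powr (q/p) * m)"
        using set_nn_integral_powr_le_Young[OF B(1) h l pq] m I pq
        by (simp add: ennreal_mult[symmetric] ennreal_plus[symmetric] del: ennreal_plus)
      then have "avg M B (\<lambda>y. ennreal (h y powr q)) \<le> ennreal (A powr (q/p) * m) / ennreal m"
        unfolding avg_def m(1) by (rule divide_right_mono_ennreal)
      then show ?thesis using m A by (simp add: avg_p epowr_ennreal divide_ennreal)
    qed
  qed
qed

lemma epowr_one: "epowr a 1 = a"
  by (cases a rule: ennreal_cases) (auto simp: epowr_def)

lemma exists_dyadic_scale:
  fixes r R :: real
  assumes "0 < r" "r \<le> R"
  shows "\<exists>j::nat. r \<le> R / 2^j \<and> R / 2^j \<le> 2 * r"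
proof -
  define P where "P j \<longleftrightarrow> R / 2^(Suc j) < r" for j :: nat
  obtain n where n: "R / r < 2^n" using real_arch_pow[of 2 "R/r"] by auto
  then have "R < r * 2^Suc n" using assms by (simp add: field_simps)
  then have "P n" unfolding P_def using assms by (simp add: field_simps)
  define j where "j = (LEAST j. P j)"
  have Pj: "P j" unfolding j_def using \<open>P n\<close> by (rule LeastI)
  have "r \<le> R / 2^j"
  proof (cases j)
    case (Suc i)
    then have "\<not> P i" unfolding j_def using not_less_Least[of i P] by simp
    then show ?thesis using Suc unfolding P_def by simp
  qed (use assms in simp)
  moreover have "R / 2^j \<le> 2 * r" using Pj unfolding P_def by (simp add: field_simps)
  ultimately show ?thesis by blast
qed

lemma dyadic_powr:
  fixes R s :: real
  assumes "R > 0"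
  shows "(R / 2^j) powr s = R powr s * ((1/2) powr s)^j"
  using assms by (simp add: powr_divide power_one_over powr_realpow[symmetric] powr_powr mult.commute)

lemma suminf_ennreal_geometric:
  fixes A c :: real
  assumes "0 \<le> A" "0 \<le> c" "c < 1"
  shows "(\<Sum>j. ennreal (A * c^j)) = ennreal (A / (1 - c))"
proof -
  have "summable (\<lambda>j. c^j)" using assms by (intro summable_geometric) auto
  then have "(\<Sum>j. ennreal (A * c^j)) = ennreal (A * (1 / (1 - c)))"
    using assms by (subst suminf_ennreal2) (auto simp: summable_mult suminf_mult suminf_geometric)
  then show ?thesis by simp
qed

lemma inverse_le_ennreal_mult_inverse:
  fixes a b :: ennreal
  assumes "0 < a" "a < \<infinity>" "0 < b" "b < \<infinity>" "b \<le> ennreal D * a" "0 \<le> D"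
  shows "inverse a \<le> ennreal D * inverse b"
proof -
  obtain a' b' where ab: "a = ennreal a'" "b = ennreal b'" "0 < a'" "0 < b'"
    using assms(1-4) by (cases a rule: ennreal_cases; cases b rule: ennreal_cases) auto
  then have "b' \<le> D * a'" using assms(5,6) by (simp add: ennreal_mult[symmetric])
  then have "1 / a' \<le> D / b'" using ab by (simp add: divide_simps mult.commute)
  then show ?thesis
    using ab assms(6) by (simp add: inverse_ennreal ennreal_mult[symmetric] inverse_eq_divide flip: divide_inverse)
qed

text \<open>\<open>\<nu>\<close> plays the role of \<open>\<frak>m\<^sub>0\<close>, and \<open>upper_bound\<close> is (M2) for \<open>k = 0\<close>.\<close>

locale doubling_codim_upper_bound =
  fixes \<mu> \<nu> :: "'a::{metric_space, second_countable_topology} measure" and D C Rm \<theta> :: real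
  assumes sets_\<mu>: "sets \<mu> = sets borel" and sets_\<nu>: "sets \<nu> = sets borel"
    and cball_pos: "\<And>x r. 0 < r \<Longrightarrow> 0 < emeasure \<mu> (cball x r)"
    and cball_finite: "\<And>x r. 0 < r \<Longrightarrow> emeasure \<mu> (cball x r) < \<infinity>"
    and doubling: "\<And>x r. 0 < r \<Longrightarrow> r \<le> Rm \<Longrightarrow> emeasure \<mu> (cball x (2*r)) \<le> ennreal D * emeasure \<mu> (cball x r)"
    and D: "1 \<le> D" and C: "0 < C" and Rm: "1 \<le> Rm" and \<theta>: "0 \<le> \<theta>"
    and upper_bound: "\<And>x r. 0 < r \<Longrightarrow> r \<le> 1 \<Longrightarrow>
      emeasure \<nu> (cball x r) \<le> ennreal C * emeasure \<mu> (cball x r) / ennreal (r powr \<theta>)"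
begin

lemma cball_real:
  assumes "0 < r"
  obtains b where "emeasure \<mu> (cball x r) = ennreal b" "0 < b"
  using cball_pos[OF assms, of x] cball_finite[OF assms, of x]
  by (cases "emeasure \<mu> (cball x r)" rule: ennreal_cases) auto

lemma sigma_finite_\<mu>: "sigma_finite_measure \<mu>"
  using sigma_finite_measure_finite_unit_cballs[OF sets_\<mu>] cball_finite by simp

lemma sigma_finite_\<nu>: "sigma_finite_measure \<nu>"
proof (rule sigma_finite_measure_finite_unit_cballs[OF sets_\<nu>])
  fix x
  have "emeasure \<nu> (cball x 1) \<le> ennreal C * emeasure \<mu> (cball x 1)"
    using upper_bound[of 1 x] by (simp add: divide_ennreal_def)
  also have "\<dots> < \<infinity>" using cball_finite[of 1 x] by (simp add: ennreal_mult_less_top)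
  finally show "emeasure \<nu> (cball x 1) < \<infinity>" .
qed

lemma inverse_emeasure_cball_le:
  assumes "x \<in> cball y \<rho>" "0 < \<rho>" "\<rho> \<le> Rm"
  shows "inverse (emeasure \<mu> (cball x \<rho>)) \<le> ennreal D * inverse (emeasure \<mu> (cball y \<rho>))"
proof (rule inverse_le_ennreal_mult_inverse)
  have "cball y \<rho> \<subseteq> cball x (2*\<rho>)"
  proof
    fix z assume "z \<in> cball y \<rho>"
    then show "z \<in> cball x (2*\<rho>)"
      using assms(1) dist_triangle3[of x z y] unfolding mem_cball by linarith
  qed
  then have "emeasure \<mu> (cball y \<rho>) \<le> emeasure \<mu> (cball x (2*\<rho>))"
    by (intro emeasure_mono) (auto simp: sets_\<mu>)
  also have "\<dots> \<le> ennreal D * emeasure \<mu> (cball x \<rho>)" using doubling assms by auto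
  finally show "emeasure \<mu> (cball y \<rho>) \<le> ennreal D * emeasure \<mu> (cball x \<rho>)" .
qed (use cball_pos cball_finite assms D in auto)

lemma kernel_le_emeasure_ratio:
  assumes "0 < \<rho>" "\<rho> \<le> Rm"
  shows "(\<integral>\<^sup>+x. indicator (cball y \<rho>) x * inverse (emeasure \<mu> (cball x \<rho>)) \<partial>\<nu>)
     \<le> ennreal D * inverse (emeasure \<mu> (cball y \<rho>)) * emeasure \<nu> (cball y \<rho>)"
proof -
  have "(\<integral>\<^sup>+x. indicator (cball y \<rho>) x * inverse (emeasure \<mu> (cball x \<rho>)) \<partial>\<nu>)
     \<le> (\<integral>\<^sup>+x. (ennreal D * inverse (emeasure \<mu> (cball y \<rho>))) * indicator (cball y \<rho>) x \<partial>\<nu>)"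
    using inverse_emeasure_cball_le assms by (intro nn_integral_mono) (auto simp: indicator_def)
  also have "\<dots> = ennreal D * inverse (emeasure \<mu> (cball y \<rho>)) * emeasure \<nu> (cball y \<rho>)"
    by (simp add: nn_integral_cmult_indicator sets_\<nu>)
  finally show ?thesis .
qed

lemma kernel_bound_small:
  assumes "0 < \<rho>" "\<rho> \<le> 1"
  shows "(\<integral>\<^sup>+x. indicator (cball y \<rho>) x * inverse (emeasure \<mu> (cball x \<rho>)) \<partial>\<nu>) \<le> ennreal (D * C / \<rho> powr \<theta>)"
proof -
  obtain b where b: "emeasure \<mu> (cball y \<rho>) = ennreal b" "0 < b"
    using cball_real[OF assms(1)] .
  have "ennreal D * inverse (emeasure \<mu> (cball y \<rho>)) * emeasure \<nu> (cball y \<rho>)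
      \<le> ennreal (D / b) * (ennreal C * ennreal b / ennreal (\<rho> powr \<theta>))"
    using upper_bound[OF assms, of y] b D
    by (auto simp: inverse_ennreal ennreal_mult[symmetric] divide_inverse intro!: mult_left_mono)
  also have "\<dots> = ennreal (D * C / \<rho> powr \<theta>)"
    using b D C assms by (simp add: ennreal_mult[symmetric] divide_ennreal)
  finally show ?thesis using kernel_le_emeasure_ratio[of \<rho> y] assms Rm by simp
qed

text \<open>Write \<open>1 = \<mu>(B(x,1)) / \<mu>(B(x,1))\<close> inside the \<open>\<nu>\<close>-integral and swap the integrals; the
  unit-scale kernel bound then applies.\<close>

lemma emeasure_\<nu>_cball_le: "emeasure \<nu> (cball y \<rho>) \<le> ennreal (D * C) * emeasure \<mu> (cball y (\<rho> + 1))"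
proof -
  define \<phi> where "\<phi> x = indicator (cball y \<rho>) x * inverse (emeasure \<mu> (cball x 1))" for x
  have \<phi>: "\<phi> \<in> borel_measurable borel"
    unfolding \<phi>_def using borel_measurable_emeasure_cball[OF sets_\<mu> sigma_finite_\<mu>, of 1]
    by (intro borel_measurable_times_ennreal borel_measurable_inverse_ennreal borel_measurable_indicator) auto
  have "emeasure \<nu> (cball y \<rho>) = (\<integral>\<^sup>+x. indicator (cball y \<rho>) x \<partial>\<nu>)"
    by (simp add: sets_\<nu>)
  also have "\<dots> = (\<integral>\<^sup>+x. \<phi> x * (\<integral>\<^sup>+u. indicator (cball x 1) u * 1 \<partial>\<mu>) \<partial>\<nu>)"
  proof (rule nn_integral_cong)
    fix x
    obtain b where "emeasure \<mu> (cball x 1) = ennreal b" "0 < b"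
      using cball_real[of 1] by auto
    then show "indicator (cball y \<rho>) x = \<phi> x * (\<integral>\<^sup>+u. indicator (cball x 1) u * 1 \<partial>\<mu>)"
      by (simp add: \<phi>_def sets_\<mu> inverse_ennreal mult.assoc ennreal_mult[symmetric])
  qed
  also have "\<dots> = (\<integral>\<^sup>+u. 1 * (\<integral>\<^sup>+x. indicator (cball u 1) x * \<phi> x \<partial>\<nu>) \<partial>\<mu>)"
    by (rule nn_integral_cball_kernel_swap[OF sets_\<mu> sets_\<nu> sigma_finite_\<mu> sigma_finite_\<nu> _ \<phi>]) simp
  also have "\<dots> \<le> (\<integral>\<^sup>+u. ennreal (D * C) * indicator (cball y (\<rho> + 1)) u \<partial>\<mu>)"
  proof (rule nn_integral_mono)
    fix u
    show "1 * (\<integral>\<^sup>+x. indicator (cball u 1) x * \<phi> x \<partial>\<nu>) \<le> ennreal (D * C) * indicator (cball y (\<rho> + 1)) u"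
    proof (cases "u \<in> cball y (\<rho> + 1)")
      case True
      have "(\<integral>\<^sup>+x. indicator (cball u 1) x * \<phi> x \<partial>\<nu>)
          \<le> (\<integral>\<^sup>+x. indicator (cball u 1) x * inverse (emeasure \<mu> (cball x 1)) \<partial>\<nu>)"
        unfolding \<phi>_def by (intro nn_integral_mono) (auto simp: indicator_def)
      also have "\<dots> \<le> ennreal (D * C)" using kernel_bound_small[of 1 u] by simp
      finally show ?thesis using True by simp
    next
      case False
      have "indicator (cball u 1) x * \<phi> x = 0" for x
        using False dist_triangle[of y u x] dist_commute[of x u] unfolding \<phi>_def indicator_def mem_cball by auto
      then have "(\<integral>\<^sup>+x. indicator (cball u 1) x * \<phi> x \<partial>\<nu>) = (\<integral>\<^sup>+x. 0 \<partial>\<nu>)"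
        by (intro nn_integral_cong) simp
      then show ?thesis using False by simp
    qed
  qed
  also have "\<dots> = ennreal (D * C) * emeasure \<mu> (cball y (\<rho> + 1))"
    by (simp add: nn_integral_cmult_indicator sets_\<mu>)
  finally show ?thesis .
qed

lemma kernel_bound:
  assumes "0 < \<rho>" "\<rho> \<le> Rm"
  shows "(\<integral>\<^sup>+x. indicator (cball y \<rho>) x * inverse (emeasure \<mu> (cball x \<rho>)) \<partial>\<nu>)
    \<le> ennreal (D^3 * C * Rm powr \<theta> / \<rho> powr \<theta>)"
proof (cases "\<rho> \<le> 1")
  case True
  have "D \<le> D^3" using D power_increasing[of 1 3 D] by simp
  then have "D * 1 * 1 \<le> D^3 * Rm powr \<theta>"
    using D Rm \<theta> by (intro mult_mono) (auto simp: ge_one_powr_ge_zero)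
  then have "D * C / \<rho> powr \<theta> \<le> D^3 * C * Rm powr \<theta> / \<rho> powr \<theta>"
    using C by (intro divide_right_mono) (auto simp: mult_ac)
  then show ?thesis using kernel_bound_small[OF assms(1) True, of y] by (meson ennreal_leI order_trans)
next
  case False
  obtain b where b: "emeasure \<mu> (cball y \<rho>) = ennreal b" "0 < b"
    using cball_real[OF assms(1)] .
  have "emeasure \<mu> (cball y (\<rho> + 1)) \<le> emeasure \<mu> (cball y (2*\<rho>))"
    using False by (intro emeasure_mono) (auto simp: sets_\<mu>)
  also have "\<dots> \<le> ennreal D * ennreal b" using doubling[OF assms, of y] b by simp
  finally have "emeasure \<nu> (cball y \<rho>) \<le> ennreal (D * C) * (ennreal D * ennreal b)"
    by (meson emeasure_\<nu>_cball_le mult_left_mono order_trans zero_le)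
  then have "emeasure \<nu> (cball y \<rho>) \<le> ennreal (D * C * (D * b))"
    using D C b by (simp add: ennreal_mult)
  then have "ennreal D * inverse (emeasure \<mu> (cball y \<rho>)) * emeasure \<nu> (cball y \<rho>)
      \<le> ennreal (D / b) * ennreal (D * C * (D * b))"
    using b D by (auto simp: inverse_ennreal ennreal_mult[symmetric] divide_inverse intro!: mult_left_mono)
  also have "\<dots> = ennreal (D^3 * C)"
    using b D C by (simp add: ennreal_mult[symmetric] power3_eq_cube)
  also have "\<dots> \<le> ennreal (D^3 * C * Rm powr \<theta> / \<rho> powr \<theta>)"
    using assms \<theta> D C by (intro ennreal_leI) (simp add: field_simps powr_mono2)
  finally show ?thesis using kernel_le_emeasure_ratio[OF assms, of y] by simp
qed

lemma nn_integral_avg_cball_le: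
  assumes "0 < \<rho>" "\<rho> \<le> Rm" and H: "H \<in> borel_measurable borel"
  shows "(\<integral>\<^sup>+x. avg \<mu> (cball x \<rho>) H \<partial>\<nu>)
    \<le> ennreal (D^3 * C * Rm powr \<theta> / \<rho> powr \<theta>) * (\<integral>\<^sup>+y. H y \<partial>\<mu>)"
proof -
  let ?K = "ennreal (D^3 * C * Rm powr \<theta> / \<rho> powr \<theta>)"
  have "avg \<mu> (cball x \<rho>) H
      = inverse (emeasure \<mu> (cball x \<rho>)) * (\<integral>\<^sup>+y. indicator (cball x \<rho>) y * H y \<partial>\<mu>)" for x
    unfolding avg_def divide_ennreal_def by (simp add: nn_integral_set_ennreal mult.commute)
  then have "(\<integral>\<^sup>+x. avg \<mu> (cball x \<rho>) H \<partial>\<nu>)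
      = (\<integral>\<^sup>+x. inverse (emeasure \<mu> (cball x \<rho>)) * (\<integral>\<^sup>+y. indicator (cball x \<rho>) y * H y \<partial>\<mu>) \<partial>\<nu>)"
    by simp
  also have "\<dots> = (\<integral>\<^sup>+y. H y * (\<integral>\<^sup>+x. indicator (cball y \<rho>) x * inverse (emeasure \<mu> (cball x \<rho>)) \<partial>\<nu>) \<partial>\<mu>)"
    using borel_measurable_emeasure_cball[OF sets_\<mu> sigma_finite_\<mu>]
    by (intro nn_integral_cball_kernel_swap[OF sets_\<mu> sets_\<nu> sigma_finite_\<mu> sigma_finite_\<nu> H]
        borel_measurable_inverse_ennreal)
  also have "\<dots> \<le> (\<integral>\<^sup>+y. ?K * H y \<partial>\<mu>)"
    using kernel_bound[OF assms(1,2)] by (intro nn_integral_mono) (simp add: mult.commute mult_left_mono)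
  also have "\<dots> = ?K * (\<integral>\<^sup>+y. H y \<partial>\<mu>)"
    using H measurable_cong_sets[OF sets_\<mu> refl] by (intro nn_integral_cmult) auto
  finally show ?thesis .
qed

lemma avg_cball_le_doubling:
  assumes "0 < r" "r \<le> \<rho>" "\<rho> \<le> 2*r" "r \<le> Rm"
  shows "avg \<mu> (cball x r) f \<le> ennreal D * avg \<mu> (cball x \<rho>) f"
proof -
  have "(\<integral>\<^sup>+y\<in>cball x r. f y \<partial>\<mu>) \<le> (\<integral>\<^sup>+y\<in>cball x \<rho>. f y \<partial>\<mu>)"
    using assms by (intro nn_integral_mono) (auto simp: indicator_def)
  moreover have "inverse (emeasure \<mu> (cball x r)) \<le> ennreal D * inverse (emeasure \<mu> (cball x \<rho>))"
  proof (rule inverse_le_ennreal_mult_inverse)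
    have "emeasure \<mu> (cball x \<rho>) \<le> emeasure \<mu> (cball x (2*r))"
      using assms by (intro emeasure_mono) (auto simp: sets_\<mu>)
    also have "\<dots> \<le> ennreal D * emeasure \<mu> (cball x r)" using doubling assms by auto
    finally show "emeasure \<mu> (cball x \<rho>) \<le> ennreal D * emeasure \<mu> (cball x r)" .
  qed (use cball_pos cball_finite assms D in auto)
  ultimately have "(\<integral>\<^sup>+y\<in>cball x r. f y \<partial>\<mu>) * inverse (emeasure \<mu> (cball x r))
      \<le> (\<integral>\<^sup>+y\<in>cball x \<rho>. f y \<partial>\<mu>) * (ennreal D * inverse (emeasure \<mu> (cball x \<rho>)))"
    by (intro mult_mono) auto
  then show ?thesis unfolding avg_def divide_ennreal_def by (simp add: mult_ac)
qed

lemma fractional_avg_le: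
  fixes g :: "'a \<Rightarrow> real"
  assumes g: "g \<in> borel_measurable \<mu>" and pq: "0 < q" "q < p" and "0 \<le> \<alpha>"
    and r: "0 < r" "r \<le> \<rho>" "\<rho> \<le> 2*r" "r \<le> Rm"
  shows "ennreal (r powr \<alpha>) * epowr (avg \<mu> (cball x r) (\<lambda>y. ennreal (\<bar>g y\<bar> powr q))) (1/q)
    \<le> epowr (ennreal (D powr (p/q) * \<rho> powr (\<alpha>*p)) * avg \<mu> (cball x \<rho>) (\<lambda>y. ennreal (\<bar>g y\<bar> powr p))) (1/p)"
proof -
  let ?Ap = "avg \<mu> (cball x \<rho>) (\<lambda>y. ennreal (\<bar>g y\<bar> powr p))"
  have \<rho>: "0 < \<rho>" using r by simp
  have "avg \<mu> (cball x r) (\<lambda>y. ennreal (\<bar>g y\<bar> powr q))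
      \<le> ennreal D * avg \<mu> (cball x \<rho>) (\<lambda>y. ennreal (\<bar>g y\<bar> powr q))"
    using avg_cball_le_doubling[OF r] .
  also have "\<dots> \<le> ennreal D * epowr ?Ap (q/p)"
    using avg_powr_le_epowr_avg[of "cball x \<rho>" \<mu> "\<lambda>y. \<bar>g y\<bar>"] g pq cball_pos[OF \<rho>] cball_finite[OF \<rho>]
    by (intro mult_left_mono) (auto simp: sets_\<mu>)
  finally have "epowr (avg \<mu> (cball x r) (\<lambda>y. ennreal (\<bar>g y\<bar> powr q))) (1/q)
      \<le> epowr (ennreal D * epowr ?Ap (q/p)) (1/q)"
    using pq by (intro epowr_mono) auto
  also have "\<dots> = ennreal (D powr (1/q)) * epowr ?Ap (1/p)"
    using pq D by (simp add: epowr_ennreal_mult epowr_epowr)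
  finally have Aq: "epowr (avg \<mu> (cball x r) (\<lambda>y. ennreal (\<bar>g y\<bar> powr q))) (1/q)
      \<le> ennreal (D powr (1/q)) * epowr ?Ap (1/p)" .
  then have "ennreal (r powr \<alpha>) * epowr (avg \<mu> (cball x r) (\<lambda>y. ennreal (\<bar>g y\<bar> powr q))) (1/q)
      \<le> ennreal (\<rho> powr \<alpha>) * (ennreal (D powr (1/q)) * epowr ?Ap (1/p))"
    using Aq r \<open>0 \<le> \<alpha>\<close> by (intro mult_mono ennreal_leI powr_mono2) auto
  also have "\<dots> = epowr (ennreal (D powr (p/q) * \<rho> powr (\<alpha>*p)) * ?Ap) (1/p)"
    using pq \<rho> D by (simp add: epowr_ennreal_mult powr_mult powr_powr ennreal_mult' mult_ac)
  finally show ?thesis .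
qed

lemma maxfun_powr_le_dyadic_sum:
  fixes g :: "'a \<Rightarrow> real"
  assumes g: "g \<in> borel_measurable \<mu>" and pq: "0 < q" "q < p" and "0 \<le> \<alpha>" and R: "0 < R" "R \<le> Rm"
  shows "epowr (maxfun \<mu> q \<alpha> R g x) p \<le> (\<Sum>j. ennreal (D powr (p/q) * (R/2^j) powr (\<alpha>*p))
    * avg \<mu> (cball x (R/2^j)) (\<lambda>y. ennreal (\<bar>g y\<bar> powr p)))"
    (is "_ \<le> (\<Sum>j. ?a j)")
proof -
  have "maxfun \<mu> q \<alpha> R g x \<le> epowr (\<Sum>j. ?a j) (1/p)"
    unfolding maxfun_def
  proof (rule SUP_least)
    fix r assume r: "r \<in> {0<..R}"
    then obtain j :: nat where j: "r \<le> R/2^j" "R/2^j \<le> 2*r"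
      using exists_dyadic_scale by force
    have "ennreal (r powr \<alpha>) * epowr (avg \<mu> (cball x r) (\<lambda>y. ennreal (\<bar>g y\<bar> powr q))) (1/q)
        \<le> epowr (?a j) (1/p)"
      using fractional_avg_le[OF g pq \<open>0 \<le> \<alpha>\<close>, of r "R/2^j"] r j R by auto
    also have "\<dots> \<le> epowr (\<Sum>j. ?a j) (1/p)"
      using pq sum_le_suminf[of ?a "{j}"] by (intro epowr_mono) (auto intro: summableI)
    finally show "ennreal (r powr \<alpha>) * epowr (avg \<mu> (cball x r) (\<lambda>y. ennreal (\<bar>g y\<bar> powr q))) (1/q)
        \<le> epowr (\<Sum>j. ?a j) (1/p)" .
  qed
  then have "epowr (maxfun \<mu> q \<alpha> R g x) p \<le> epowr (epowr (\<Sum>j. ?a j) (1/p)) p"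
    using pq by (intro epowr_mono) auto
  also have "\<dots> = (\<Sum>j. ?a j)"
    using pq by (simp add: epowr_epowr epowr_one)
  finally show ?thesis .
qed

lemma nn_integral_maxfun_powr_le:
  fixes g :: "'a \<Rightarrow> real"
  assumes g: "g \<in> borel_measurable \<mu>" and pq: "0 < q" "q < p" and \<alpha>: "\<theta> < \<alpha> * p"
    and R: "0 < R" "R \<le> Rm"
  shows "(\<integral>\<^sup>+x. epowr (maxfun \<mu> q \<alpha> R g x) p \<partial>\<nu>)
    \<le> ennreal (D powr (p/q) * (D^3 * C * Rm powr \<theta>) * R powr (\<alpha>*p - \<theta>) / (1 - (1/2) powr (\<alpha>*p - \<theta>)))
      * (\<integral>\<^sup>+y. ennreal (\<bar>g y\<bar> powr p) \<partial>\<mu>)"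
proof -
  let ?H = "\<lambda>y. ennreal (\<bar>g y\<bar> powr p)"
  let ?c = "D powr (p/q)" and ?K = "D^3 * C * Rm powr \<theta>"
  define s where "s = \<alpha>*p - \<theta>"
  define t where "t = (1/2::real) powr s"
  have t: "0 \<le> t" "t < 1" using \<alpha> unfolding t_def s_def by (auto simp: powr01_less_one)
  have "0 \<le> \<alpha>" using \<alpha> \<theta> pq by (smt (verit) mult_nonpos_nonneg)
  have K: "0 \<le> ?K" using D C by simp
  have radius: "R/2^j \<le> Rm" for j :: nat
    using R order_trans[of "R/2^j" R Rm] by (simp add: divide_le_eq)
  have "g \<in> borel_measurable borel" using g measurable_cong_sets[OF sets_\<mu> refl] by blast
  then have H: "?H \<in> borel_measurable borel" by measurable
  have avg_meas: "(\<lambda>x. avg \<mu> (cball x \<rho>) ?H) \<in> borel_measurable \<nu>" for \<rho>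
    using borel_measurable_avg_cball[OF sets_\<mu> sigma_finite_\<mu> H] measurable_cong_sets[OF sets_\<nu> refl] by blast
  have scale: "?c * (R/2^j) powr (\<alpha>*p) * (?K / (R/2^j) powr \<theta>) = ?c * ?K * R powr s * t^j" for j :: nat
  proof -
    have "?c * (R/2^j) powr (\<alpha>*p) * (?K / (R/2^j) powr \<theta>)
        = ?c * ?K * ((R/2^j) powr (\<alpha>*p) / (R/2^j) powr \<theta>)"
      by simp
    also have "(R/2^j) powr (\<alpha>*p) / (R/2^j) powr \<theta> = R powr s * t^j"
      using R dyadic_powr[OF R(1), of j s] unfolding s_def t_def by (simp add: powr_diff)
    finally show ?thesis by (simp add: mult_ac)
  qed
  have "(\<integral>\<^sup>+x. epowr (maxfun \<mu> q \<alpha> R g x) p \<partial>\<nu>)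
      \<le> (\<integral>\<^sup>+x. (\<Sum>j. ennreal (?c * (R/2^j) powr (\<alpha>*p)) * avg \<mu> (cball x (R/2^j)) ?H) \<partial>\<nu>)"
    by (intro nn_integral_mono maxfun_powr_le_dyadic_sum[OF g pq \<open>0 \<le> \<alpha>\<close> R])
  also have "\<dots> = (\<Sum>j. ennreal (?c * (R/2^j) powr (\<alpha>*p)) * (\<integral>\<^sup>+x. avg \<mu> (cball x (R/2^j)) ?H \<partial>\<nu>))"
    using avg_meas by (simp add: nn_integral_suminf nn_integral_cmult)
  also have "\<dots> \<le> (\<Sum>j. ennreal (?c * (R/2^j) powr (\<alpha>*p)) * (ennreal (?K / (R/2^j) powr \<theta>) * integral\<^sup>N \<mu> ?H))"
    using R H radius by (intro suminf_le mult_left_mono nn_integral_avg_cball_le) auto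
  also have "\<dots> = (\<Sum>j. ennreal (?c * ?K * R powr s * t^j) * integral\<^sup>N \<mu> ?H)"
  proof (rule suminf_cong)
    fix j :: nat
    have "0 \<le> ?c * (R/2^j) powr (\<alpha>*p)" "0 \<le> ?K / (R/2^j) powr \<theta>" using K by auto
    then show "ennreal (?c * (R/2^j) powr (\<alpha>*p)) * (ennreal (?K / (R/2^j) powr \<theta>) * integral\<^sup>N \<mu> ?H)
        = ennreal (?c * ?K * R powr s * t^j) * integral\<^sup>N \<mu> ?H"
      by (simp only: mult.assoc[symmetric] ennreal_mult[symmetric] scale)
  qed
  also have "\<dots> = (\<Sum>j. ennreal (?c * ?K * R powr s * t^j)) * integral\<^sup>N \<mu> ?H"
    using ennreal_suminf_cmult[of "integral\<^sup>N \<mu> ?H"] by (simp add: mult.commute)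
  also have "\<dots> = ennreal (?c * ?K * R powr s / (1 - t)) * integral\<^sup>N \<mu> ?H"
    using K t by (subst suminf_ennreal_geometric) auto
  finally show ?thesis unfolding s_def t_def .
qed

lemma lp_norm_maxfun_le:
  assumes pq: "0 < q" "q < p" and \<alpha>: "\<theta> < \<alpha> * p" and R: "0 < R" "R \<le> Rm"
  shows "\<exists>K>0. \<forall>g. g \<in> borel_measurable \<mu> \<longrightarrow>
    lp_norm \<nu> (maxfun \<mu> q \<alpha> R g) p \<le> ennreal K * lp_norm \<mu> (\<lambda>x. ennreal \<bar>g x\<bar>) p"
proof -
  define K where "K = D powr (p/q) * (D^3 * C * Rm powr \<theta>) * R powr (\<alpha>*p - \<theta>) / (1 - (1/2) powr (\<alpha>*p - \<theta>))"
  have "(1/2::real) powr (\<alpha>*p - \<theta>) < 1" using \<alpha> by (simp add: powr01_less_one)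
  then have K: "0 < K" unfolding K_def using D C R Rm by (intro divide_pos_pos mult_pos_pos) auto
  show ?thesis
  proof (intro exI[of _ "K powr (1/p)"] conjI allI impI)
    fix g :: "'a \<Rightarrow> real" assume g: "g \<in> borel_measurable \<mu>"
    have "lp_norm \<nu> (maxfun \<mu> q \<alpha> R g) p
        \<le> epowr (ennreal K * (\<integral>\<^sup>+y. ennreal (\<bar>g y\<bar> powr p) \<partial>\<mu>)) (1/p)"
      unfolding lp_norm_def K_def using pq
      by (intro epowr_mono nn_integral_maxfun_powr_le[OF g pq \<alpha> R]) auto
    then show "lp_norm \<nu> (maxfun \<mu> q \<alpha> R g) p \<le> ennreal (K powr (1/p)) * lp_norm \<mu> (\<lambda>x. ennreal \<bar>g x\<bar>) p"
      using K pq by (simp add: lp_norm_def epowr_ennreal epowr_ennreal_mult)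
  qed (use K in simp)
qed

end

lemma unif_loc_doubling_bound:
  assumes "unif_loc_doubling \<mu>" "0 < R"
  obtains D where "1 \<le> D"
    "\<And>x r. 0 < r \<Longrightarrow> r \<le> R \<Longrightarrow> emeasure \<mu> (cball x (2*r)) \<le> ennreal D * emeasure \<mu> (cball x r)"
proof -
  obtain D0 where D0: "\<And>r x. r \<in> {0<..R} \<Longrightarrow> emeasure \<mu> (cball x (2*r)) \<le> ennreal D0 * emeasure \<mu> (cball x r)"
    using assms unfolding unif_loc_doubling_def by blast
  show ?thesis
  proof (rule that[of "max D0 1"])
    fix x r assume "0 < r" "r \<le> R"
    then have "emeasure \<mu> (cball x (2*r)) \<le> ennreal D0 * emeasure \<mu> (cball x r)" using D0 by simp
    also have "\<dots> \<le> ennreal (max D0 1) * emeasure \<mu> (cball x r)"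
      by (intro mult_right_mono ennreal_leI) auto
    finally show "emeasure \<mu> (cball x (2*r)) \<le> ennreal (max D0 1) * emeasure \<mu> (cball x r)" .
  qed simp
qed

lemma frakM_first_measure_upper_bound:
  assumes "frakM \<mu> \<theta> S \<epsilon> m"
  obtains C where "0 < C" "sets (m 0) = sets borel"
    "\<And>x r. 0 < r \<Longrightarrow> r \<le> 1 \<Longrightarrow>
      emeasure (m 0) (cball x r) \<le> ennreal C * emeasure \<mu> (cball x r) / ennreal (r powr \<theta>)"
  using assms unfolding frakM_def loc_finite_borel_def by (metis power_0)

theorem lemma9p1:
  fixes \<mu> :: "('a::polish_space) measure" and m :: "nat \<Rightarrow> 'a measure"
    and p q \<theta> \<epsilon> \<alpha> :: real and S :: "'a set"
  assumes "mms \<mu>"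
    and "1 < p" and "class_A \<mu> p"
    and "1 < q" and "q < p" and "class_A \<mu> q"
    and "0 \<le> \<theta>" and "\<theta> < q"
    and "LCR \<mu> \<theta> S" and "closed S"
    and "0 < \<epsilon>" and "\<epsilon> \<le> 1/10" and "frakM \<mu> \<theta> S \<epsilon> m"
    and "\<alpha> > \<theta> / p"
  shows "\<forall>R>0. \<exists>C>0. \<forall>g. g \<in> borel_measurable \<mu> \<and>
            (\<integral>\<^sup>+ x. ennreal (\<bar>g x\<bar> powr p) \<partial>\<mu>) < \<infinity> \<longrightarrow>
            lp_norm (m 0) (maxfun \<mu> q \<alpha> R g) p \<le> ennreal C * lp_norm \<mu> (\<lambda>x. ennreal \<bar>g x\<bar>) p"
proof (intro allI impI)
  fix R :: real assume R: "0 < R"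
  define Rm where "Rm = max R 1"
  have doubling: "unif_loc_doubling \<mu>" using assms(6) unfolding class_A_def by simp
  have Rm: "0 < Rm" unfolding Rm_def by simp
  obtain D where D: "1 \<le> D"
    "\<And>x r. 0 < r \<Longrightarrow> r \<le> Rm \<Longrightarrow> emeasure \<mu> (cball x (2*r)) \<le> ennreal D * emeasure \<mu> (cball x r)"
    using unif_loc_doubling_bound[OF doubling Rm] by blast
  obtain C where C: "0 < C" "sets (m 0) = sets borel"
    "\<And>x r. 0 < r \<Longrightarrow> r \<le> 1 \<Longrightarrow>
      emeasure (m 0) (cball x r) \<le> ennreal C * emeasure \<mu> (cball x r) / ennreal (r powr \<theta>)"
    using frakM_first_measure_upper_bound[OF assms(13)] by blast
  interpret doubling_codim_upper_bound \<mu> "m 0" D C Rm \<theta>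
    using assms(1,7) D C unfolding mms_def Rm_def by unfold_locales auto
  have "\<theta> < \<alpha> * p" using assms(2,14) by (simp add: divide_less_eq mult.commute)
  then show "\<exists>C>0. \<forall>g. g \<in> borel_measurable \<mu> \<and> (\<integral>\<^sup>+ x. ennreal (\<bar>g x\<bar> powr p) \<partial>\<mu>) < \<infinity> \<longrightarrow>
      lp_norm (m 0) (maxfun \<mu> q \<alpha> R g) p \<le> ennreal C * lp_norm \<mu> (\<lambda>x. ennreal \<bar>g x\<bar>) p"
    using lp_norm_maxfun_le[of q p \<alpha> R] assms(4,5) R unfolding Rm_def by auto
qed

end
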